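(* Let $\mathbf{k}$ be algebraically closed of characteristic $2$, $V$ a $2n$-dimensional $\mathbf{k}$-vector space with nondegenerate symplectic form $\langle,\rangle$, $G=Sp(V)$, $\mathfrak g=\mathfrak{sp}(V)$. Let $\mathcal F^G$ be the set of complete flags $0=V_0\subset V_1\subset\dots\subset V_{2n}=V$ with $V_{2n-i}=V_i^\perp$ and $\langle,\rangle|_{V_i}=0$ for $i\le n$; it is identified with the variety of Borel subgroups of $G$ by sending a flag to its stabilizer $B$. Then for $\xi\in\mathcal N_{\mathfrak g^*}$ and a flag $F=(V_i)\in\mathcal F^G$ with stabilizer $B$ (Lie algebra $\mathfrak b$), we have $\xi(\mathfrak b)=0$ if and only if $\beta_\xi(V_i,V_{2n+1-i})=0$ and $\alpha_\xi(V_i)=0$ for all $i\le n$. Thus the Springer fiber $\mathcal B^G_\xi$ is identified with $\mathcal F^G_\xi=\{F\in\mathcal F^G:\beta_\xi(V_i,V_{2n+1-i})=0,\ \alpha_\xi(V_i)=0\ \forall i\le n\}$.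
   Context: For $\xi\in\mathfrak g^*$ choose $X\in\mathfrak{gl}(V)$ with $\xi(x)=\mathrm{tr}(Xx)$ for all $x\in\mathfrak g$; $\alpha_\xi(v)=\langle v,Xv\rangle$ is a well-defined quadratic form on $V$, and $\beta_\xi(v,w)=\alpha_\xi(v+w)-\alpha_\xi(v)-\alpha_\xi(w)$. $\mathcal N_{\mathfrak g^*}$ is the set of $\xi\in\mathfrak g^*$ vanishing on the Lie algebra of some Borel subgroup; the Springer fiber $\mathcal B^G_\xi$ is the set of Borel subgroups $B$ with $\xi(\mathrm{Lie}\,B)=0$. *)

theory Defs
  imports "HOL-Analysis.Analysis" "HOL-Computational_Algebra.Polynomial"
begin

definition bilinear_form :: "('k::field^'n \<Rightarrow> 'k^'n \<Rightarrow> 'k) \<Rightarrow> bool" where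
  "bilinear_form B \<longleftrightarrow>
     (\<forall>u v w. B (u + v) w = B u w + B v w) \<and>
     (\<forall>u v w. B u (v + w) = B u v + B u w) \<and>
     (\<forall>c v w. B (c *s v) w = c * B v w) \<and>
     (\<forall>c v w. B v (c *s w) = c * B v w)"

definition symplectic_form :: "('k::field^'n \<Rightarrow> 'k^'n \<Rightarrow> 'k) \<Rightarrow> bool" where
  "symplectic_form B \<longleftrightarrow> bilinear_form B \<and> (\<forall>v. B v v = 0) \<and>
     (\<forall>v. (\<forall>w. B v w = 0) \<longrightarrow> v = 0)"

definition perp :: "('k::field^'n \<Rightarrow> 'k^'n \<Rightarrow> 'k) \<Rightarrow> ('k^'n) set \<Rightarrow> ('k^'n) set" where
  "perp B S = {w. \<forall>v\<in>S. B v w = 0}"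

definition sp_alg :: "('k::field^'n \<Rightarrow> 'k^'n \<Rightarrow> 'k) \<Rightarrow> ('k^'n^'n) set" where
  "sp_alg B = {x. \<forall>v w. B (x *v v) w + B v (x *v w) = 0}"

definition mat_scale :: "'k::field \<Rightarrow> 'k^'n^'n \<Rightarrow> 'k^'n^'n" where
  "mat_scale c x = (\<chi> i j. c * x $ i $ j)"

text \<open>Elements of the dual g^* (functions considered only on g).\<close>
definition dual_elem :: "('k::field^'n \<Rightarrow> 'k^'n \<Rightarrow> 'k) \<Rightarrow> ('k^'n^'n \<Rightarrow> 'k) \<Rightarrow> bool" where
  "dual_elem B \<xi> \<longleftrightarrow>
     (\<forall>x\<in>sp_alg B. \<forall>y\<in>sp_alg B. \<xi> (x + y) = \<xi> x + \<xi> y) \<and>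
     (\<forall>c. \<forall>x\<in>sp_alg B. \<xi> (mat_scale c x) = c * \<xi> x)"

definition trace_rep :: "('k::field^'n \<Rightarrow> 'k^'n \<Rightarrow> 'k) \<Rightarrow> ('k^'n^'n \<Rightarrow> 'k) \<Rightarrow> 'k^'n^'n" where
  "trace_rep B \<xi> = (SOME X. \<forall>x\<in>sp_alg B. \<xi> x = trace (X ** x))"

definition alpha :: "('k::field^'n \<Rightarrow> 'k^'n \<Rightarrow> 'k) \<Rightarrow> ('k^'n^'n \<Rightarrow> 'k) \<Rightarrow> 'k^'n \<Rightarrow> 'k" where
  "alpha B \<xi> v = B v (trace_rep B \<xi> *v v)"

definition beta :: "('k::field^'n \<Rightarrow> 'k^'n \<Rightarrow> 'k) \<Rightarrow> ('k^'n^'n \<Rightarrow> 'k) \<Rightarrow> 'k^'n \<Rightarrow> 'k^'n \<Rightarrow> 'k" where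
  "beta B \<xi> v w = alpha B \<xi> (v + w) - alpha B \<xi> v - alpha B \<xi> w"

definition iso_flag :: "('k::field^'n \<Rightarrow> 'k^'n \<Rightarrow> 'k) \<Rightarrow> nat \<Rightarrow> (nat \<Rightarrow> ('k^'n) set) \<Rightarrow> bool" where
  "iso_flag B m F \<longleftrightarrow>
     F 0 = {0} \<and> F (2*m) = UNIV \<and>
     (\<forall>i\<le>2*m. vec.subspace (F i) \<and> vec.dim (F i) = i) \<and>
     (\<forall>i<2*m. F i \<subset> F (Suc i)) \<and>
     (\<forall>i\<le>2*m. F (2*m - i) = perp B (F i)) \<and>
     (\<forall>i\<le>m. \<forall>v\<in>F i. \<forall>w\<in>F i. B v w = 0)"

definition borel_lie :: "('k::field^'n \<Rightarrow> 'k^'n \<Rightarrow> 'k) \<Rightarrow> nat \<Rightarrow> (nat \<Rightarrow> ('k^'n) set) \<Rightarrow> ('k^'n^'n) set" where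
  "borel_lie B m F = {x\<in>sp_alg B. \<forall>i\<le>2*m. \<forall>v\<in>F i. x *v v \<in> F i}"

definition nilcone_dual :: "('k::field^'n \<Rightarrow> 'k^'n \<Rightarrow> 'k) \<Rightarrow> nat \<Rightarrow> ('k^'n^'n \<Rightarrow> 'k) set" where
  "nilcone_dual B m = {\<xi>. dual_elem B \<xi> \<and>
      (\<exists>F. iso_flag B m F \<and> (\<forall>x\<in>borel_lie B m F. \<xi> x = 0))}"

end

theory Submission
  imports Defs
begin

text \<open>
  Write \<xi> = tr(X \<cdot>) on sp(V) and let R(a,c) be the rank-one operator u \<mapsto> <a,u> c, so that
  tr(X R(a,c)) = <a, X c>. For v \<in> V_i and w \<in> V_{2m+1-i} with i \<le> m, the operators R(v,v) and
  R(v,w) + R(w,v) lie in sp(V) and stabilise the flag, and \<xi> takes the values \<alpha>_\<xi>(v) and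
  \<beta>_\<xi>(v,w) on them. Conversely, choose a basis e_k \<in> V_k adapted to the flag and the basis f_k
  with <f_k, e_l> = \<delta>_{kl}; then f_k \<in> V_{2m+1-k}. Every x \<in> sp(V) equals \<Sum>_k R(x e_k, f_k), so
  \<xi>(x) = \<Sum>_{k,l} s_{kl} <f_l, X f_k> with s_{kl} = <x e_k, e_l>. This matrix is symmetric, and for x in
  the Borel subalgebra it vanishes when k + l \<le> 2m. Grouping the terms (k,l) and (l,k) leaves only
  values \<beta>_\<xi>(f_l, f_k) and \<alpha>_\<xi>(f_k) with k + l > 2m, which the flag conditions kill. Neither the
  characteristic nor algebraic closedness of the field plays a role.
\<close>

context
  fixes B :: "'k::field^'n \<Rightarrow> 'k^'n \<Rightarrow> 'k"
  assumes bf: "bilinear_form B"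
begin

lemma bilinear_form_add_left: "B (u + v) w = B u w + B v w"
  using bf unfolding bilinear_form_def by blast

lemma bilinear_form_add_right: "B u (v + w) = B u v + B u w"
  using bf unfolding bilinear_form_def by blast

lemma bilinear_form_scale_left: "B (c *s v) w = c * B v w"
  using bf unfolding bilinear_form_def by blast

lemma bilinear_form_scale_right: "B v (c *s w) = c * B v w"
  using bf unfolding bilinear_form_def by blast

lemma bilinear_form_zero_left: "B 0 w = 0"
  using bilinear_form_scale_left[of 0 0 w] by simp

lemma bilinear_form_zero_right: "B v 0 = 0"
  using bilinear_form_scale_right[of v 0 0] by simp

lemma bilinear_form_minus_left: "B (- v) w = - B v w"
  using bilinear_form_scale_left[of "-1" v w] by simp

lemma bilinear_form_diff_left: "B (u - v) w = B u w - B v w"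
  by (simp only: diff_conv_add_uminus bilinear_form_add_left bilinear_form_minus_left)

lemma bilinear_form_sum_left: "B (\<Sum>i\<in>I. f i) w = (\<Sum>i\<in>I. B (f i) w)"
  by (induction I rule: infinite_finite_induct)
    (simp_all add: bilinear_form_zero_left bilinear_form_add_left)

lemma bilinear_form_sum_right: "B v (\<Sum>i\<in>I. f i) = (\<Sum>i\<in>I. B v (f i))"
  by (induction I rule: infinite_finite_induct)
    (simp_all add: bilinear_form_zero_right bilinear_form_add_right)

lemma bilinear_form_span_eq_0:
  assumes "\<forall>w\<in>S. B v w = 0" and "w \<in> vec.span S"
  shows "B v w = 0"
proof -
  have "vec.subspace {w. B v w = 0}"
    unfolding vec.subspace_def
    by (simp add: bilinear_form_zero_right bilinear_form_add_right bilinear_form_scale_right)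
  then have "vec.span S \<subseteq> {w. B v w = 0}"
    using assms(1) by (intro vec.span_minimal) auto
  then show ?thesis using assms(2) by blast
qed

end

lemma symplectic_form_bilinear: "symplectic_form B \<Longrightarrow> bilinear_form B"
  by (simp add: symplectic_form_def)

lemma symplectic_form_skew:
  assumes "symplectic_form B"
  shows "B v w = - B w v"
proof -
  have bf: "bilinear_form B" using assms by (rule symplectic_form_bilinear)
  have "0 = B (v + w) (v + w)" using assms by (simp add: symplectic_form_def)
  also have "\<dots> = B v v + B v w + B w v + B w w"
    using bf by (simp add: bilinear_form_add_left bilinear_form_add_right)
  also have "\<dots> = B v w + B w v" using assms by (simp add: symplectic_form_def)
  finally show ?thesis by (simp add: eq_neg_iff_add_eq_0)
qed

section \<open>Linear functionals on matrices\<close>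

interpretation matrix_space: vector_space "mat_scale :: 'k::field \<Rightarrow> 'k^'n^'n \<Rightarrow> _"
  by unfold_locales (auto simp: mat_scale_def vec_eq_iff algebra_simps)

interpretation matrix_space_pair:
  vector_space_pair "mat_scale :: 'k::field \<Rightarrow> 'k^'n^'n \<Rightarrow> _" "(*) :: 'k \<Rightarrow> 'k \<Rightarrow> 'k" ..

definition matrix_unit :: "'n \<Rightarrow> 'n \<Rightarrow> 'k::field^'n^'n" where
  "matrix_unit i j = (\<chi> a b. if a = i \<and> b = j then 1 else 0)"

lemma matrix_unit_expansion:
  "(M::'k::field^'n^'n) = (\<Sum>i\<in>UNIV. \<Sum>j\<in>UNIV. mat_scale (M$i$j) (matrix_unit i j))"
proof -
  have "(\<Sum>j\<in>UNIV. mat_scale (M$i$j) (matrix_unit i j) $ a $ b) = (if i = a then M $ a $ b else 0)"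
    for i a b
  proof -
    have "(\<Sum>j\<in>UNIV. mat_scale (M$i$j) (matrix_unit i j) $ a $ b)
        = (\<Sum>j\<in>UNIV. if j = b then (if i = a then M$i$j else 0) else 0)"
      by (rule sum.cong) (auto simp: mat_scale_def matrix_unit_def)
    then show ?thesis by simp
  qed
  then show ?thesis by (simp add: vec_eq_iff sum_component)
qed

lemma linear_functional_eq_trace:
  assumes "Vector_Spaces.linear (mat_scale :: 'k::field \<Rightarrow> 'k^'n^'n \<Rightarrow> _) (*) g"
  shows "g M = trace ((\<chi> j i. g (matrix_unit i j)) ** M)"
proof -
  interpret g: Vector_Spaces.linear "mat_scale :: 'k \<Rightarrow> 'k^'n^'n \<Rightarrow> _" "(*)" g by fact
  have "g M = g (\<Sum>i\<in>UNIV. \<Sum>j\<in>UNIV. mat_scale (M$i$j) (matrix_unit i j))"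
    by (subst matrix_unit_expansion) (rule refl)
  also have "\<dots> = (\<Sum>i\<in>UNIV. \<Sum>j\<in>UNIV. M$i$j * g (matrix_unit i j))"
    by (simp add: g.sum g.scale)
  also have "\<dots> = trace ((\<chi> j i. g (matrix_unit i j)) ** M)"
    unfolding trace_def matrix_matrix_mult_def by (subst sum.swap) (simp add: mult.commute)
  finally show ?thesis .
qed

lemma trace_mult_sum:
  fixes X :: "'a::comm_ring_1^'n^'n"
  shows "trace (X ** (\<Sum>i\<in>I. g i)) = (\<Sum>i\<in>I. trace (X ** g i))"
proof (induction I rule: infinite_finite_induct)
  case (insert i I)
  then show ?case by (simp add: matrix_add_ldistrib trace_add)
qed (simp_all add: trace_def matrix_matrix_mult_def)

section \<open>The trace representative of \<open>\<xi>\<close>\<close>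

lemma mat_scale_mult_vec: "mat_scale c x *v v = c *s (x *v v)"
  by (simp add: mat_scale_def matrix_vector_mult_def vec_eq_iff sum_distrib_left mult.assoc)

lemma subspace_sp_alg:
  assumes bf: "bilinear_form B"
  shows "matrix_space.subspace (sp_alg B)"
proof -
  have "x + y \<in> sp_alg B" if "x \<in> sp_alg B" "y \<in> sp_alg B" for x y
    using that bf unfolding sp_alg_def
    by (simp add: matrix_vector_mult_add_rdistrib bilinear_form_add_left bilinear_form_add_right
        algebra_simps)
  moreover have "mat_scale c x \<in> sp_alg B" if "x \<in> sp_alg B" for c x
    using that bf unfolding sp_alg_def
    by (simp add: mat_scale_mult_vec bilinear_form_scale_left bilinear_form_scale_right
        flip: distrib_left)
  moreover have "0 \<in> sp_alg B"
    using bf by (simp add: sp_alg_def bilinear_form_zero_left bilinear_form_zero_right)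
  ultimately show ?thesis unfolding matrix_space.subspace_def by blast
qed

lemma trace_rep_exists:
  fixes B :: "'k::field^'n \<Rightarrow> 'k^'n \<Rightarrow> 'k"
  assumes bf: "bilinear_form B" and \<xi>: "dual_elem B \<xi>"
  shows "\<exists>X. \<forall>x\<in>sp_alg B. \<xi> x = trace (X ** x)"
proof -
  have sub: "matrix_space.subspace (sp_alg B)" using bf by (rule subspace_sp_alg)
  obtain S where S: "S \<subseteq> sp_alg B" "matrix_space.independent S" "sp_alg B \<subseteq> matrix_space.span S"
    by (rule matrix_space.basis_exists)
  obtain g where g: "Vector_Spaces.linear (mat_scale :: 'k \<Rightarrow> 'k^'n^'n \<Rightarrow> _) (*) g"
    and gS: "\<forall>x\<in>S. g x = \<xi> x"
    using matrix_space_pair.linear_independent_extend[OF S(2), of \<xi>] by blast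
  interpret g: Vector_Spaces.linear "mat_scale :: 'k \<Rightarrow> 'k^'n^'n \<Rightarrow> _" "(*)" g by (rule g)
  have \<xi>_add: "\<xi> (x + y) = \<xi> x + \<xi> y" if "x \<in> sp_alg B" "y \<in> sp_alg B" for x y
    using \<xi> that unfolding dual_elem_def by blast
  have \<xi>_scale: "\<xi> (mat_scale c x) = c * \<xi> x" if "x \<in> sp_alg B" for c x
    using \<xi> that unfolding dual_elem_def by blast
  have \<xi>_0: "\<xi> 0 = 0"
    using \<xi>_scale[where c = 0 and x = 0] matrix_space.subspace_0[OF sub] by simp
  have "matrix_space.subspace {x \<in> sp_alg B. g x = \<xi> x}"
    unfolding matrix_space.subspace_def
    using matrix_space.subspace_0[OF sub] matrix_space.subspace_add[OF sub]
      matrix_space.subspace_scale[OF sub]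
    by (simp add: \<xi>_0 \<xi>_add \<xi>_scale g.add g.scale)
  then have "matrix_space.span S \<subseteq> {x \<in> sp_alg B. g x = \<xi> x}"
    using S(1) gS by (intro matrix_space.span_minimal) auto
  then have "\<xi> x = trace ((\<chi> j i. g (matrix_unit i j)) ** x)" if "x \<in> sp_alg B" for x
    using S(3) that linear_functional_eq_trace[OF g, of x] by auto
  then show ?thesis by blast
qed

lemma trace_rep:
  assumes "bilinear_form B" and "dual_elem B \<xi>" and "x \<in> sp_alg B"
  shows "\<xi> x = trace (trace_rep B \<xi> ** x)"
  using someI_ex[OF trace_rep_exists[OF assms(1,2)]] assms(3) unfolding trace_rep_def by blast

lemma beta_eq:
  assumes "bilinear_form B"
  shows "beta B \<xi> v w = B v (trace_rep B \<xi> *v w) + B w (trace_rep B \<xi> *v v)"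
  using assms unfolding beta_def alpha_def
  by (simp add: matrix_vector_right_distrib bilinear_form_add_left bilinear_form_add_right algebra_simps)

lemma beta_commute: "beta B \<xi> v w = beta B \<xi> w v"
  by (simp add: beta_def add.commute)

section \<open>Isotropic flags and adapted dual bases\<close>

context
  fixes B :: "'k::field^'n \<Rightarrow> 'k^'n \<Rightarrow> 'k" and m :: nat and F :: "nat \<Rightarrow> ('k^'n) set"
  assumes flag: "iso_flag B m F"
begin

lemma iso_flag_zero: "F 0 = {0}"
  using flag unfolding iso_flag_def by simp

lemma iso_flag_top: "F (2*m) = UNIV"
  using flag unfolding iso_flag_def by simp

lemma iso_flag_subspace: "i \<le> 2*m \<Longrightarrow> vec.subspace (F i)"
  using flag unfolding iso_flag_def by simp

lemma iso_flag_dim: "i \<le> 2*m \<Longrightarrow> vec.dim (F i) = i"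
  using flag unfolding iso_flag_def by simp

lemma iso_flag_strict: "i < 2*m \<Longrightarrow> F i \<subset> F (Suc i)"
  using flag unfolding iso_flag_def by simp

lemma iso_flag_perp: "i \<le> 2*m \<Longrightarrow> F (2*m - i) = perp B (F i)"
  using flag unfolding iso_flag_def by simp

lemma iso_flag_isotropic: "i \<le> m \<Longrightarrow> v \<in> F i \<Longrightarrow> w \<in> F i \<Longrightarrow> B v w = 0"
  using flag unfolding iso_flag_def by simp

lemma iso_flag_orthogonal:
  assumes "i \<le> 2*m" "v \<in> F i" "w \<in> F (2*m - i)"
  shows "B v w = 0"
  using iso_flag_perp[OF assms(1)] assms(2,3) unfolding perp_def by blast

lemma iso_flag_mono:
  assumes "i \<le> j" "j \<le> 2*m"
  shows "F i \<subseteq> F j"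
  using assms
proof (induction j)
  case (Suc j)
  show ?case
  proof (cases "i = Suc j")
    case False
    then have "F i \<subseteq> F j" using Suc by simp
    also have "F j \<subseteq> F (Suc j)" using iso_flag_strict[of j] Suc.prems by simp
    finally show ?thesis .
  qed simp
qed simp

lemma iso_flag_independent_chain:
  assumes e: "\<forall>k\<in>{1..2*m}. e k \<in> F k - F (k - 1)"
  shows "j \<le> 2*m \<Longrightarrow>
    vec.independent (e ` {1..j}) \<and> card (e ` {1..j}) = j \<and> e ` {1..j} \<subseteq> F j"
proof (induction j)
  case (Suc j)
  then have IH: "vec.independent (e ` {1..j})" "card (e ` {1..j}) = j" "e ` {1..j} \<subseteq> F j"
    by auto
  have "Suc j \<in> {1..2*m}" using Suc.prems by simp
  then have new: "e (Suc j) \<in> F (Suc j)" "e (Suc j) \<notin> F j" using e[rule_format, of "Suc j"] by auto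
  have "vec.span (e ` {1..j}) \<subseteq> F j"
    using IH(3) iso_flag_subspace[of j] Suc.prems by (intro vec.span_minimal) auto
  then have not_in_span: "e (Suc j) \<notin> vec.span (e ` {1..j})" using new by blast
  have image: "e ` {1..Suc j} = insert (e (Suc j)) (e ` {1..j})"
    by (auto simp: atLeastAtMostSuc_conv)
  have "e (Suc j) \<notin> e ` {1..j}" using not_in_span vec.span_base by blast
  then have "card (e ` {1..Suc j}) = Suc j" unfolding image using IH(2) by simp
  moreover have "e ` {1..Suc j} \<subseteq> F (Suc j)"
    unfolding image using IH(3) new(1) iso_flag_mono[of j "Suc j"] Suc.prems by auto
  ultimately show ?case
    unfolding image using vec.independent_insertI[OF not_in_span IH(1)] by blast
qed (simp add: vec.independent_empty)

lemma iso_flag_adapted_basis: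
  obtains e where "\<forall>k\<in>{1..2*m}. e k \<in> F k"
    and "\<And>j. j \<le> 2*m \<Longrightarrow> F j = vec.span (e ` {1..j})"
    and "inj_on e {1..2*m}" and "vec.independent (e ` {1..2*m})"
proof -
  have "\<exists>v. v \<in> F k - F (k - 1)" if "k \<in> {1..2*m}" for k
  proof -
    have "k - 1 < 2*m" "Suc (k - 1) = k" using that by auto
    then show ?thesis using psubset_imp_ex_mem[OF iso_flag_strict[of "k - 1"]] by simp
  qed
  then obtain e where e: "\<forall>k\<in>{1..2*m}. e k \<in> F k - F (k - 1)"
    by metis
  note chain = iso_flag_independent_chain[OF e]
  have "F j = vec.span (e ` {1..j})" if "j \<le> 2*m" for j
  proof
    show "F j \<subseteq> vec.span (e ` {1..j})"
      using chain[OF that] iso_flag_dim[OF that] by (intro vec.card_ge_dim_independent) auto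
    show "vec.span (e ` {1..j}) \<subseteq> F j"
      using chain[OF that] iso_flag_subspace[OF that] by (intro vec.span_minimal) auto
  qed
  moreover have "inj_on e {1..2*m}"
    using chain[of "2*m"] by (simp add: inj_on_iff_eq_card)
  ultimately show ?thesis
    using that e chain[of "2*m"] by blast
qed

end

lemma independent_image_coefficients_zero:
  fixes e :: "'i \<Rightarrow> 'k::field^'n"
  assumes "inj_on e I" "finite I" "vec.independent (e ` I)" "(\<Sum>k\<in>I. c k *s e k) = 0" "k \<in> I"
  shows "c k = 0"
proof -
  define c' where "c' v = c (the_inv_into I e v)" for v
  have "(\<Sum>v\<in>e ` I. c' v *s v) = (\<Sum>k\<in>I. c k *s e k)"
    using assms(1) by (simp add: sum.reindex c'_def the_inv_into_f_f)
  then have "c' (e k) = 0"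
    using vec.independentD[OF assms(3) finite_imageI[OF assms(2)] subset_refl, of c'] assms(4,5)
    by simp
  then show ?thesis using assms(1,5) by (simp add: c'_def the_inv_into_f_f)
qed

lemma dual_basis_exists:
  fixes B :: "'k::field^'n \<Rightarrow> 'k^'n \<Rightarrow> 'k" and e :: "'i \<Rightarrow> 'k^'n"
  assumes bf: "bilinear_form B" and nondeg: "\<forall>v. (\<forall>w. B v w = 0) \<longrightarrow> v = 0"
    and I: "finite I" "inj_on e I" "vec.independent (e ` I)" "vec.span (e ` I) = UNIV"
  obtains f where "\<And>k l. k \<in> I \<Longrightarrow> l \<in> I \<Longrightarrow> B (f k) (e l) = (if k = l then 1 else 0)"
    and "\<And>w. w = (\<Sum>k\<in>I. B w (e k) *s f k)"
proof -
  \<comment> \<open>\<open>\<Phi>\<close> is injective by nondegeneracy, hence bijective; \<open>f k\<close> is the preimage of \<open>e k\<close>.\<close>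
  define \<Phi> where "\<Phi> w = (\<Sum>k\<in>I. B w (e k) *s e k)" for w
  have "Vector_Spaces.linear (*s) (*s) \<Phi>"
    unfolding Vector_Spaces.linear_iff
    by (simp add: vec.vector_space_axioms \<Phi>_def bilinear_form_add_left[OF bf]
        bilinear_form_scale_left[OF bf] vec.scale_left_distrib sum.distrib vec.scale_sum_right)
  then interpret \<Phi>: Vector_Spaces.linear "(*s) :: 'k \<Rightarrow> 'k^'n \<Rightarrow> _" "(*s)" \<Phi> .
  have coefficients: "c k = d k"
    if "(\<Sum>k\<in>I. c k *s e k) = (\<Sum>k\<in>I. d k *s e k)" "k \<in> I" for c d k
    using independent_image_coefficients_zero[OF I(2,1,3), of "\<lambda>k. c k - d k"] that
    by (simp add: vec.scale_left_diff_distrib sum_subtractf)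
  have "inj \<Phi>"
  proof (rule injI)
    fix u v assume "\<Phi> u = \<Phi> v"
    then have "B (u - v) (e k) = 0" if "k \<in> I" for k
      using coefficients[of "\<lambda>k. B u (e k)" "\<lambda>k. B v (e k)"] that
      by (simp add: \<Phi>_def bilinear_form_diff_left[OF bf])
    then have "B (u - v) w = 0" for w
      using bilinear_form_span_eq_0[OF bf, of "e ` I" "u - v" w] I(4) by blast
    then have "u - v = 0" using nondeg by blast
    then show "u = v" by simp
  qed
  then have "surj \<Phi>" by (rule vec.linear_inj_imp_surj[OF \<Phi>.linear_axioms])
  define f where "f k = inv \<Phi> (e k)" for k
  have f: "\<Phi> (f k) = e k" for k
    unfolding f_def using \<open>surj \<Phi>\<close> by (rule surj_f_inv_f)
  have dual: "B (f k) (e l) = (if k = l then 1 else 0)" if "k \<in> I" "l \<in> I" for k l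
  proof -
    have "(\<Sum>l\<in>I. B (f k) (e l) *s e l) = (\<Sum>l\<in>I. (if k = l then 1 else 0) *s e l)"
      using f[of k] that(1) I(1) by (simp add: \<Phi>_def if_distrib[of "\<lambda>c. c *s _"] cong: if_cong)
    then show ?thesis by (rule coefficients[OF _ that(2)])
  qed
  have expansion: "w = (\<Sum>k\<in>I. B w (e k) *s f k)" for w
  proof (rule injD[OF \<open>inj \<Phi>\<close>])
    show "\<Phi> w = \<Phi> (\<Sum>k\<in>I. B w (e k) *s f k)"
      unfolding \<Phi>.sum \<Phi>.scale f by (simp add: \<Phi>_def)
  qed
  show ?thesis by (rule that[OF dual expansion])
qed

lemma iso_flag_dual_basis_mem:
  assumes s: "symplectic_form B" and flag: "iso_flag B m F"
    and span: "\<And>j. j \<le> 2*m \<Longrightarrow> F j = vec.span (e ` {1..j})"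
    and dual: "\<And>k l. k \<in> {1..2*m} \<Longrightarrow> l \<in> {1..2*m} \<Longrightarrow> B (f k) (e l) = (if k = l then 1 else 0)"
    and k: "k \<in> {1..2*m}"
  shows "f k \<in> F (2*m + 1 - k)"
proof -
  have km: "k - 1 \<le> 2*m" using k by auto
  have "B (f k) w = 0" if "w \<in> F (k - 1)" for w
  proof (rule bilinear_form_span_eq_0[OF symplectic_form_bilinear[OF s]])
    show "\<forall>v\<in>e ` {1..k - 1}. B (f k) v = 0"
    proof
      fix v assume "v \<in> e ` {1..k - 1}"
      then obtain l where "l \<in> {1..k - 1}" "v = e l" by blast
      then show "B (f k) v = 0" using dual[of k l] k by auto
    qed
    show "w \<in> vec.span (e ` {1..k - 1})" using span[OF km] that by blast
  qed
  then have "B w (f k) = 0" if "w \<in> F (k - 1)" for w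
    using that symplectic_form_skew[OF s, of w "f k"] by simp
  then have "f k \<in> F (2*m - (k - 1))"
    using iso_flag_perp[OF flag km] unfolding perp_def by blast
  moreover have "2*m - (k - 1) = 2*m + 1 - k" using k by auto
  ultimately show ?thesis by simp
qed

lemma iso_flag_dual_bases:
  assumes s: "symplectic_form B" and flag: "iso_flag B m F"
  obtains e f where "\<forall>k\<in>{1..2*m}. e k \<in> F k"
    and "\<And>k. k \<in> {1..2*m} \<Longrightarrow> f k \<in> F (2*m + 1 - k)"
    and "\<And>w. w = (\<Sum>k\<in>{1..2*m}. B w (e k) *s f k)"
proof -
  have bf: "bilinear_form B" using s by (rule symplectic_form_bilinear)
  have nondeg: "\<forall>v. (\<forall>w. B v w = 0) \<longrightarrow> v = 0" using s by (simp add: symplectic_form_def)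
  obtain e where e: "\<forall>k\<in>{1..2*m}. e k \<in> F k"
    and span: "\<And>j. j \<le> 2*m \<Longrightarrow> F j = vec.span (e ` {1..j})"
    and inj: "inj_on e {1..2*m}" and indep: "vec.independent (e ` {1..2*m})"
    using iso_flag_adapted_basis[OF flag] by blast
  have "vec.span (e ` {1..2*m}) = UNIV" using span[of "2*m"] iso_flag_top[OF flag] by simp
  then obtain f where dual: "\<And>k l. k \<in> {1..2*m} \<Longrightarrow> l \<in> {1..2*m} \<Longrightarrow>
                                   B (f k) (e l) = (if k = l then 1 else 0)"
    and expansion: "\<And>w. w = (\<Sum>k\<in>{1..2*m}. B w (e k) *s f k)"
    using dual_basis_exists[OF bf nondeg finite_atLeastAtMost inj indep] by blast
  show ?thesis
    using that[OF e iso_flag_dual_basis_mem[OF s flag span dual] expansion] by blast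
qed

section \<open>Rank-one operators\<close>

definition rank_one :: "('k::field^'n \<Rightarrow> 'k^'n \<Rightarrow> 'k) \<Rightarrow> 'k^'n \<Rightarrow> 'k^'n \<Rightarrow> 'k^'n^'n" where
  "rank_one B a c = (\<chi> i j. c$i * B a (axis j 1))"

lemma rank_one_mult_vec:
  assumes bf: "bilinear_form B"
  shows "rank_one B a c *v u = B a u *s c"
proof -
  have "B a u = B a (\<Sum>j\<in>UNIV. u$j *s axis j 1)" by (simp add: basis_expansion)
  also have "\<dots> = (\<Sum>j\<in>UNIV. u$j * B a (axis j 1))"
    by (simp add: bilinear_form_sum_right[OF bf] bilinear_form_scale_right[OF bf])
  finally show ?thesis
    by (simp add: vec_eq_iff rank_one_def matrix_vector_mult_def sum_distrib_left
        mult.commute mult.left_commute)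
qed

lemma trace_mult_rank_one:
  assumes bf: "bilinear_form B"
  shows "trace (X ** rank_one B a c) = B a (X *v c)"
proof -
  have "B a (X *v c) = B a (\<Sum>i\<in>UNIV. (X *v c)$i *s axis i 1)" by (simp add: basis_expansion)
  also have "\<dots> = (\<Sum>i\<in>UNIV. (X *v c)$i * B a (axis i 1))"
    by (simp add: bilinear_form_sum_right[OF bf] bilinear_form_scale_right[OF bf])
  also have "\<dots> = trace (X ** rank_one B a c)"
    by (simp add: trace_def matrix_matrix_mult_def rank_one_def matrix_vector_mult_def
        sum_distrib_right mult.assoc)
  finally show ?thesis by simp
qed

lemma sum_matrix_vector_mult: "(\<Sum>i\<in>I. g i) *v u = (\<Sum>i\<in>I. g i *v u)"
proof (induction I rule: infinite_finite_induct)
  case (insert i I)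
  then show ?case by (simp add: matrix_vector_mult_add_rdistrib)
qed (simp_all add: matrix_vector_mult_def vec_eq_iff)

context
  fixes B :: "'k::field^'n \<Rightarrow> 'k^'n \<Rightarrow> 'k"
  assumes s: "symplectic_form B"
begin

lemma rank_one_in_sp_alg: "rank_one B v v \<in> sp_alg B"
proof -
  have bf: "bilinear_form B" using s by (rule symplectic_form_bilinear)
  have "B (rank_one B v v *v u) z + B u (rank_one B v v *v z) = B v u * B v z + B v z * B u v"
    for u z
    by (simp add: rank_one_mult_vec[OF bf] bilinear_form_scale_left[OF bf]
        bilinear_form_scale_right[OF bf])
  also have "\<dots> u z = 0" for u z
    using symplectic_form_skew[OF s, of u v] by (simp add: algebra_simps)
  finally show ?thesis by (simp add: sp_alg_def)
qed

lemma rank_one_sym_in_sp_alg: "rank_one B v w + rank_one B w v \<in> sp_alg B"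
proof -
  have bf: "bilinear_form B" using s by (rule symplectic_form_bilinear)
  have "B ((rank_one B v w + rank_one B w v) *v u) z + B u ((rank_one B v w + rank_one B w v) *v z)
      = B v u * B w z + B w u * B v z + (B v z * B u w + B w z * B u v)" for u z
    by (simp add: matrix_vector_mult_add_rdistrib rank_one_mult_vec[OF bf]
        bilinear_form_add_left[OF bf] bilinear_form_add_right[OF bf]
        bilinear_form_scale_left[OF bf] bilinear_form_scale_right[OF bf])
  also have "\<dots> u z = 0" for u z
    using symplectic_form_skew[OF s, of u w] symplectic_form_skew[OF s, of u v]
    by (simp add: algebra_simps)
  finally show ?thesis by (simp add: sp_alg_def)
qed

lemma rank_one_in_borel_lie:
  assumes flag: "iso_flag B m F" and i: "i \<le> m" and v: "v \<in> F i"
  shows "rank_one B v v \<in> borel_lie B m F"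
proof -
  have bf: "bilinear_form B" using s by (rule symplectic_form_bilinear)
  have "B v u *s v \<in> F j" if j: "j \<le> 2*m" and u: "u \<in> F j" for j u
  proof (cases "i \<le> j")
    case True
    then have "v \<in> F j" using iso_flag_mono[OF flag True j] v by blast
    then show ?thesis using vec.subspace_scale[OF iso_flag_subspace[OF flag j]] by blast
  next
    case False
    then have "u \<in> F i" using iso_flag_mono[OF flag, of j i] u i by auto
    then have "B v u = 0" using iso_flag_isotropic[OF flag i v] by blast
    then show ?thesis using vec.subspace_0[OF iso_flag_subspace[OF flag j]] by simp
  qed
  then show ?thesis
    using rank_one_in_sp_alg unfolding borel_lie_def by (simp add: rank_one_mult_vec[OF bf])
qed

lemma rank_one_sym_in_borel_lie:
  assumes flag: "iso_flag B m F" and i: "1 \<le> i" "i \<le> m"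
    and v: "v \<in> F i" and w: "w \<in> F (2*m + 1 - i)"
  shows "rank_one B v w + rank_one B w v \<in> borel_lie B m F"
proof -
  have bf: "bilinear_form B" using s by (rule symplectic_form_bilinear)
  have "B v u *s w + B w u *s v \<in> F j" if j: "j \<le> 2*m" and u: "u \<in> F j" for j u
  proof -
    note sub = iso_flag_subspace[OF flag j]
    have v_j: "B w u *s v \<in> F j"
    proof (cases "i \<le> j")
      case True
      then have "v \<in> F j" using iso_flag_mono[OF flag True j] v by blast
      then show ?thesis using vec.subspace_scale[OF sub] by blast
    next
      case False
      then have "j \<le> i - 1" "i - 1 \<le> 2*m" "2*m - (2*m + 1 - i) = i - 1" using i by auto
      then have "u \<in> F (2*m - (2*m + 1 - i))" using iso_flag_mono[OF flag] u by auto
      then have "B w u = 0" using iso_flag_orthogonal[OF flag _ w] i by auto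
      then show ?thesis using vec.subspace_0[OF sub] by simp
    qed
    show ?thesis
    proof (cases "2*m + 1 - i \<le> j")
      case True
      then have "w \<in> F j" using iso_flag_mono[OF flag True j] w by blast
      then show ?thesis using v_j vec.subspace_scale[OF sub] vec.subspace_add[OF sub] by blast
    next
      case False
      then have "j \<le> 2*m - i" by simp
      then have "u \<in> F (2*m - i)" using iso_flag_mono[OF flag _ diff_le_self] u by blast
      then have "B v u = 0" using iso_flag_orthogonal[OF flag _ v] i by auto
      then show ?thesis using v_j by simp
    qed
  qed
  then show ?thesis
    using rank_one_sym_in_sp_alg unfolding borel_lie_def
    by (simp add: matrix_vector_mult_add_rdistrib rank_one_mult_vec[OF bf])
qed

lemma sp_alg_eq_sum_rank_one:
  assumes x: "x \<in> sp_alg B" and expansion: "\<And>w. w = (\<Sum>k\<in>I. B w (e k) *s f k)"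
  shows "x = (\<Sum>k\<in>I. rank_one B (x *v e k) (f k))"
proof (rule matrix_eq[THEN iffD2], rule allI)
  have bf: "bilinear_form B" using s by (rule symplectic_form_bilinear)
  fix u
  have "B (x *v u) (e k) = B (x *v e k) u" for k
  proof -
    have "B (x *v u) (e k) + B u (x *v e k) = 0" using x unfolding sp_alg_def by blast
    then show ?thesis using symplectic_form_skew[OF s, of u "x *v e k"] by (simp add: add_eq_0_iff)
  qed
  then have "x *v u = (\<Sum>k\<in>I. B (x *v e k) u *s f k)"
    using expansion[of "x *v u"] by simp
  also have "\<dots> = (\<Sum>k\<in>I. rank_one B (x *v e k) (f k)) *v u"
    by (simp add: sum_matrix_vector_mult rank_one_mult_vec[OF bf])
  finally show "x *v u = (\<Sum>k\<in>I. rank_one B (x *v e k) (f k)) *v u" .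
qed

lemma trace_mult_sp_alg:
  assumes x: "x \<in> sp_alg B" and expansion: "\<And>w. w = (\<Sum>k\<in>I. B w (e k) *s f k)"
  shows "trace (X ** x) = (\<Sum>k\<in>I. \<Sum>l\<in>I. B (x *v e k) (e l) * B (f l) (X *v f k))"
proof -
  have bf: "bilinear_form B" using s by (rule symplectic_form_bilinear)
  have "trace (X ** x) = trace (X ** (\<Sum>k\<in>I. rank_one B (x *v e k) (f k)))"
    using sp_alg_eq_sum_rank_one[OF x expansion] by (rule arg_cong)
  also have "\<dots> = (\<Sum>k\<in>I. B (x *v e k) (X *v f k))"
    by (simp add: trace_mult_sum trace_mult_rank_one[OF bf])
  also have "\<dots> = (\<Sum>k\<in>I. \<Sum>l\<in>I. B (x *v e k) (e l) * B (f l) (X *v f k))"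
  proof (rule sum.cong)
    fix k
    have "B (x *v e k) (X *v f k) = B (\<Sum>l\<in>I. B (x *v e k) (e l) *s f l) (X *v f k)"
      using expansion[of "x *v e k"] by (rule arg_cong)
    then show "B (x *v e k) (X *v f k) = (\<Sum>l\<in>I. B (x *v e k) (e l) * B (f l) (X *v f k))"
      by (simp add: bilinear_form_sum_left[OF bf] bilinear_form_scale_left[OF bf])
  qed simp
  finally show ?thesis .
qed

end

lemma sum_sum_skew_eq_0:
  fixes h :: "'a \<Rightarrow> 'a \<Rightarrow> 'b::comm_ring"
  assumes "finite I" "\<And>k l. k \<in> I \<Longrightarrow> l \<in> I \<Longrightarrow> h k l + h l k = 0" "\<And>k. k \<in> I \<Longrightarrow> h k k = 0"
  shows "(\<Sum>k\<in>I. \<Sum>l\<in>I. h k l) = 0"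
  using assms
proof (induction I rule: finite_induct)
  case (insert a I)
  have "(\<Sum>k\<in>insert a I. \<Sum>l\<in>insert a I. h k l)
      = h a a + (\<Sum>l\<in>I. h a l + h l a) + (\<Sum>k\<in>I. \<Sum>l\<in>I. h k l)"
    using insert.hyps by (simp add: sum.distrib algebra_simps)
  also have "\<dots> = 0"
    using insert.prems insert.IH by simp
  finally show ?case .
qed simp

lemma dual_elem_rank_one_eq_alpha:
  assumes bf: "bilinear_form B" and \<xi>: "dual_elem B \<xi>" and "rank_one B v v \<in> sp_alg B"
  shows "\<xi> (rank_one B v v) = alpha B \<xi> v"
  using trace_rep[OF bf \<xi> assms(3)] unfolding alpha_def by (simp add: trace_mult_rank_one[OF bf])

lemma dual_elem_rank_one_sym_eq_beta:
  assumes bf: "bilinear_form B" and \<xi>: "dual_elem B \<xi>"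
    and "rank_one B v w + rank_one B w v \<in> sp_alg B"
  shows "\<xi> (rank_one B v w + rank_one B w v) = beta B \<xi> v w"
  using trace_rep[OF bf \<xi> assms(3)]
  by (simp add: matrix_add_ldistrib trace_add trace_mult_rank_one[OF bf] beta_eq[OF bf])

lemma alpha_beta_eq_0_if_vanishes_on_borel_lie:
  assumes s: "symplectic_form B" and \<xi>: "dual_elem B \<xi>" and flag: "iso_flag B m F"
    and vanish: "\<forall>x\<in>borel_lie B m F. \<xi> x = 0" and i: "i \<le> m"
  shows "(\<forall>v\<in>F i. \<forall>w\<in>F (2*m + 1 - i). beta B \<xi> v w = 0) \<and> (\<forall>v\<in>F i. alpha B \<xi> v = 0)"
proof (intro conjI ballI)
  have bf: "bilinear_form B" using s by (rule symplectic_form_bilinear)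
  fix v assume v: "v \<in> F i"
  show "alpha B \<xi> v = 0"
    using vanish[rule_format, OF rank_one_in_borel_lie[OF s flag i v]]
      dual_elem_rank_one_eq_alpha[OF bf \<xi> rank_one_in_sp_alg[OF s], of v]
    by simp
  fix w assume w: "w \<in> F (2*m + 1 - i)"
  show "beta B \<xi> v w = 0"
  proof (cases "i = 0")
    case True
    then have "v = 0" using v iso_flag_zero[OF flag] by simp
    then show ?thesis by (simp add: beta_def alpha_def bilinear_form_zero_left[OF bf])
  next
    case False
    then show ?thesis
      using vanish[rule_format, OF rank_one_sym_in_borel_lie[OF s flag _ i v w]]
        dual_elem_rank_one_sym_eq_beta[OF bf \<xi> rank_one_sym_in_sp_alg[OF s], of v w]
      by simp
  qed
qed

lemma sp_alg_form_commute:
  assumes s: "symplectic_form B" and x: "x \<in> sp_alg B"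
  shows "B (x *v a) b = B (x *v b) a"
proof -
  have "B (x *v b) a + B b (x *v a) = 0" using x unfolding sp_alg_def by blast
  then show ?thesis using symplectic_form_skew[OF s, of b "x *v a"] by (simp add: add_eq_0_iff)
qed

lemma borel_lie_form_eq_0:
  assumes s: "symplectic_form B" and flag: "iso_flag B m F" and x: "x \<in> borel_lie B m F"
    and a: "a \<in> F k" and b: "b \<in> F l" and kl: "k + l \<le> 2*m"
  shows "B (x *v a) b = 0"
proof -
  have "x *v a \<in> F k" using x a kl unfolding borel_lie_def by auto
  moreover have "l \<le> 2*m - k" using kl by simp
  then have "b \<in> F (2*m - k)" using iso_flag_mono[OF flag _ diff_le_self] b by blast
  moreover have "k \<le> 2*m" using kl by simp
  ultimately show ?thesis using iso_flag_orthogonal[OF flag] by blast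
qed

lemma beta_dual_basis_eq_0:
  assumes vanish: "\<forall>i\<le>m. \<forall>v\<in>F i. \<forall>w\<in>F (2*m + 1 - i). beta B \<xi> v w = 0"
    and flag: "iso_flag B m F" and f: "\<And>k. k \<in> {1..2*m} \<Longrightarrow> f k \<in> F (2*m + 1 - k)"
    and kl: "k \<in> {1..2*m}" "l \<in> {1..2*m}" "2*m < k + l"
  shows "beta B \<xi> (f k) (f l) = 0"
proof -
  have *: "beta B \<xi> (f k) (f l) = 0" if kl: "k \<in> {1..2*m}" "l \<in> {1..2*m}" "2*m < k + l" "l \<le> k"
    for k l
  proof -
    have "2*m + 1 - l \<le> k" "k \<le> 2*m" using kl by auto
    then have "f l \<in> F k" using f[OF kl(2)] iso_flag_mono[OF flag] by blast
    moreover have i: "2*m + 1 - k \<le> m" "2*m + 1 - (2*m + 1 - k) = k" using kl by auto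
    ultimately show ?thesis using vanish[rule_format, OF i(1) f[OF kl(1)]] by (simp only: i(2))
  qed
  show ?thesis
  proof (cases "l \<le> k")
    case False
    then have "beta B \<xi> (f l) (f k) = 0" using *[of l k] kl by simp
    then show ?thesis by (simp only: beta_commute)
  qed (use *[OF kl] in simp)
qed

lemma vanishes_on_borel_lie_if_alpha_beta_eq_0:
  assumes s: "symplectic_form B" and \<xi>: "dual_elem B \<xi>" and flag: "iso_flag B m F"
    and vanish: "\<forall>i\<le>m. (\<forall>v\<in>F i. \<forall>w\<in>F (2*m + 1 - i). beta B \<xi> v w = 0) \<and>
                        (\<forall>v\<in>F i. alpha B \<xi> v = 0)"
    and x: "x \<in> borel_lie B m F"
  shows "\<xi> x = 0"
proof -
  have bf: "bilinear_form B" using s by (rule symplectic_form_bilinear)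
  have x_sp: "x \<in> sp_alg B" using x by (simp add: borel_lie_def)
  obtain e f where e: "\<forall>k\<in>{1..2*m}. e k \<in> F k"
    and f: "\<And>k. k \<in> {1..2*m} \<Longrightarrow> f k \<in> F (2*m + 1 - k)"
    and expansion: "\<And>w. w = (\<Sum>k\<in>{1..2*m}. B w (e k) *s f k)"
    using iso_flag_dual_bases[OF s flag] by blast
  define S where "S k l = B (x *v e k) (e l)" for k l
  define t where "t a c = B a (trace_rep B \<xi> *v c)" for a c
  have "\<xi> x = (\<Sum>k\<in>{1..2*m}. \<Sum>l\<in>{1..2*m}. S k l * t (f l) (f k))"
    unfolding S_def t_def trace_rep[OF bf \<xi> x_sp] by (rule trace_mult_sp_alg[OF s x_sp expansion])
  also have "\<dots> = 0"
  proof (rule sum_sum_skew_eq_0)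
    fix k l assume k: "k \<in> {1..2*m}" and l: "l \<in> {1..2*m}"
    have "S k l * t (f l) (f k) + S l k * t (f k) (f l) = S k l * beta B \<xi> (f l) (f k)"
      using sp_alg_form_commute[OF s x_sp, of "e k" "e l"]
      by (simp add: S_def t_def beta_eq[OF bf] distrib_left add.commute)
    also have "\<dots> = 0"
    proof (cases "k + l \<le> 2*m")
      case True
      then have "S k l = 0"
        unfolding S_def using borel_lie_form_eq_0[OF s flag x] e k l by blast
      then show ?thesis by simp
    next
      case False
      then show ?thesis
        using beta_dual_basis_eq_0[OF _ flag f l k] vanish by (simp add: add.commute)
    qed
    finally show "S k l * t (f l) (f k) + S l k * t (f k) (f l) = 0" .
  next
    fix k assume k: "k \<in> {1..2*m}"
    show "S k k * t (f k) (f k) = 0"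
    proof (cases "k + k \<le> 2*m")
      case True
      then have "S k k = 0"
        unfolding S_def using borel_lie_form_eq_0[OF s flag x] e k by blast
      then show ?thesis by simp
    next
      case False
      then have "2*m + 1 - k \<le> m" by simp
      then have "alpha B \<xi> (f k) = 0" using vanish f[OF k] by blast
      then show ?thesis by (simp add: t_def alpha_def)
    qed
  qed simp
  finally show ?thesis .
qed

theorem lemma3p2:
  fixes B :: "'k::alg_closed_field^'n \<Rightarrow> 'k^'n \<Rightarrow> 'k"
    and m :: nat
    and \<xi> :: "'k^'n^'n \<Rightarrow> 'k"
    and F :: "nat \<Rightarrow> ('k^'n) set"
  assumes "CHAR('k) = 2"
    and "CARD('n) = 2 * m"
    and "symplectic_form B"
    and "\<xi> \<in> nilcone_dual B m"
    and "iso_flag B m F"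
  shows "(\<forall>x\<in>borel_lie B m F. \<xi> x = 0) \<longleftrightarrow>
         (\<forall>i\<le>m. (\<forall>v\<in>F i. \<forall>w\<in>F (2*m + 1 - i). beta B \<xi> v w = 0) \<and>
                 (\<forall>v\<in>F i. alpha B \<xi> v = 0))"
proof -
  have \<xi>: "dual_elem B \<xi>" using assms(4) by (simp add: nilcone_dual_def)
  show ?thesis
    using alpha_beta_eq_0_if_vanishes_on_borel_lie[OF assms(3) \<xi> assms(5)]
      vanishes_on_borel_lie_if_alpha_beta_eq_0[OF assms(3) \<xi> assms(5)]
    by blast
qed

end
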